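(* Let $\alpha>0$ be fixed and let $\mathscr{K}$ be a convex feasible functional. Consider the augmented dual ascent scheme $$x^{n+1} = \operatorname{arg\,min}_{x} \mathscr{K}(x)+\langle x,\Lambda^n\rangle +\frac{\alpha}{2}\|x\|^2,\qquad \Lambda^{n+1} = \Lambda^{n} + \alpha\mathcal{P}_{\mathcal{M}^\perp}(x^{n+1}),\qquad \Lambda^0=0.$$ Suppose that $(\Lambda^{n})_{n=1}^\infty$ is a bounded sequence. Then $(x^{n})_{n=1}^\infty$ and $(\Lambda^{n})_{n=1}^\infty$ converge to some limits $x^\star$ and $\Lambda^\star$, where $x^\star$ is the solution to $\operatorname{arg\,min}_{x\in\mathcal{M}}\mathscr{K}(x)+\frac{\alpha}{2}\|x\|^2$.
   Context: $\mathcal{H}$ is a finite dimensional Hilbert space, $\mathcal{M}\subset\mathcal{H}$ a linear subspace, $\mathcal{P}_{\mathcal{M}^\perp}$ the orthogonal projection onto $\mathcal{M}^\perp$. A functional $\mathscr{K}:\mathcal{H}\to(-\infty,\infty]$ is called feasible if it is lower semi-continuous, proper (not identically $\infty$), bounded below, and satisfies $\lim_{\|x\|\rightarrow\infty}\mathscr{K}(x)/\|x\|=\infty$. *)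

theory Defs
  imports "HOL-Analysis.Analysis"
begin

definition orth_proj :: "'a::euclidean_space set \<Rightarrow> 'a \<Rightarrow> 'a" where
  "orth_proj S x = (THE y. y \<in> S \<and> x - y \<in> orthogonal_comp S)"

definition lsc :: "('a::topological_space \<Rightarrow> ereal) \<Rightarrow> bool" where
  "lsc K \<longleftrightarrow> (\<forall>x. K x \<le> Liminf (at x) K)"

definition feasible :: "('a::euclidean_space \<Rightarrow> ereal) \<Rightarrow> bool" where
  "feasible K \<longleftrightarrow> lsc K \<and> (\<exists>x. K x \<noteq> \<infinity>) \<and> (\<exists>c::real. \<forall>x. ereal c \<le> K x)
     \<and> ((\<lambda>x. K x / ereal (norm x)) \<longlongrightarrow> \<infinity>) at_infinity"

definition convex_ereal :: "('a::real_vector \<Rightarrow> ereal) \<Rightarrow> bool" where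
  "convex_ereal K \<longleftrightarrow> (\<forall>x y t. 0 \<le> t \<and> t \<le> 1 \<longrightarrow>
      K ((1 - t) *\<^sub>R x + t *\<^sub>R y) \<le> ereal (1 - t) * K x + ereal t * K y)"

end

theory Submission
  imports Defs
begin

text \<open>
  The x-update minimises a strongly convex function, so every iterate obeys the quadratic growth
  inequality L(\<Lambda>n, x(n+1)) + \<alpha>/2 |z - x(n+1)|^2 \<le> L(\<Lambda>n, z) for the augmented Lagrangian L.
  Comparing consecutive steps, the dual values L(\<Lambda>n, x(n+1)) increase by at least
  \<alpha>/2 |P x(n+1)|^2, where P projects onto the orthogonal complement of M; as they are bounded,
  P x(n+1) \<rightarrow> 0. A cluster point (x*, \<Lambda>*) of the bounded sequence (x(n+1), \<Lambda>n) therefore has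
  x* \<in> M, and lower semicontinuity carries the growth inequality to the limit, making (x*, \<Lambda>*) a
  saddle point. Relative to a saddle point, |\<Lambda>n - \<Lambda>*|^2 drops by at least \<alpha>^2 |x(n+1) - x*|^2
  in every step, so x(n) \<rightarrow> x* and, since a subsequence of \<Lambda>n tends to \<Lambda>*, also \<Lambda>n \<rightarrow> \<Lambda>*.
  Finally \<Lambda>* is orthogonal to M, so on M minimising L(\<Lambda>*, -) is minimising K + \<alpha>/2 |-|^2.
\<close>

lemma orth_proj_unique:
  fixes S :: "'a::euclidean_space set"
  assumes "subspace S" "y \<in> S" "v - y \<in> S\<^sup>\<bottom>"
  shows "orth_proj S v = y"
  unfolding orth_proj_def
proof (rule the_equality)
  show "y \<in> S \<and> v - y \<in> S\<^sup>\<bottom>"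
    using assms by simp
next
  fix y' assume y': "y' \<in> S \<and> v - y' \<in> S\<^sup>\<bottom>"
  have "y' - y \<in> S"
    using assms y' by (simp add: subspace_diff)
  moreover have "(v - y) - (v - y') \<in> S\<^sup>\<bottom>"
    by (rule subspace_diff[OF subspace_orthogonal_comp]) (use assms y' in auto)
  ultimately have "y' - y \<in> S \<inter> S\<^sup>\<bottom>"
    by simp
  then show "y' = y"
    using orthogonal_Int_0[OF assms(1)] by auto
qed

lemma
  fixes S :: "'a::euclidean_space set"
  assumes "subspace S"
  shows orth_proj_in: "orth_proj S v \<in> S"
    and orth_proj_orthogonal: "v - orth_proj S v \<in> S\<^sup>\<bottom>"
proof -
  obtain y w where "y \<in> S" "w \<in> S\<^sup>\<bottom>" "v = y + w"
    using subspace_sum_orthogonal_comp[OF assms] set_plus_elim by (metis UNIV_I)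
  moreover from this have "orth_proj S v = y"
    by (intro orth_proj_unique[OF assms]) auto
  ultimately show "orth_proj S v \<in> S" "v - orth_proj S v \<in> S\<^sup>\<bottom>"
    by auto
qed

lemma linear_orth_proj:
  fixes S :: "'a::euclidean_space set"
  assumes "subspace S"
  shows "linear (orth_proj S)"
proof (rule linearI)
  note P = orth_proj_in[OF assms] orth_proj_orthogonal[OF assms]
  fix u v :: 'a and c :: real
  have "(u - orth_proj S u) + (v - orth_proj S v) \<in> S\<^sup>\<bottom>"
    using P by (simp add: subspace_add subspace_orthogonal_comp)
  then show "orth_proj S (u + v) = orth_proj S u + orth_proj S v"
    using P assms by (intro orth_proj_unique) (simp_all add: subspace_add algebra_simps)
  have "c *\<^sub>R (u - orth_proj S u) \<in> S\<^sup>\<bottom>"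
    using P by (simp add: subspace_scale subspace_orthogonal_comp)
  then show "orth_proj S (c *\<^sub>R u) = c *\<^sub>R orth_proj S u"
    using P assms by (intro orth_proj_unique) (simp_all add: subspace_scale scaleR_right_diff_distrib)
qed

lemma inner_orth_proj:
  fixes S :: "'a::euclidean_space set"
  assumes "subspace S" "w \<in> S"
  shows "inner (orth_proj S v) w = inner v w"
proof -
  have "inner (v - orth_proj S v) w = 0"
    using orth_proj_orthogonal[OF assms(1), of v] assms(2)
    by (auto simp: orthogonal_comp_def orthogonal_def inner_commute)
  then show ?thesis
    by (simp add: inner_diff_left)
qed

lemma norm_orth_proj_le:
  fixes S :: "'a::euclidean_space set"
  assumes "subspace S"
  shows "norm (orth_proj S v) \<le> norm v"
proof -
  have "inner (orth_proj S v) (orth_proj S v) = inner v (orth_proj S v)"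
    using inner_orth_proj[OF assms orth_proj_in[OF assms]] .
  then have "(norm v)\<^sup>2 = (norm (orth_proj S v))\<^sup>2 + (norm (v - orth_proj S v))\<^sup>2"
    by (simp add: power2_norm_eq_inner inner_diff_left inner_diff_right inner_commute)
  then have "(norm (orth_proj S v))\<^sup>2 \<le> (norm v)\<^sup>2"
    by simp
  then show ?thesis
    by (simp add: power2_le_iff_abs_le)
qed

lemma orth_proj_eq_0_iff:
  fixes S :: "'a::euclidean_space set"
  assumes "subspace S"
  shows "orth_proj S v = 0 \<longleftrightarrow> v \<in> S\<^sup>\<bottom>"
  using orth_proj_orthogonal[OF assms, of v] orth_proj_unique[OF assms, of 0 v]
  by (auto simp: subspace_0[OF assms])

lemma norm_orth_proj_le_norm_diff:
  fixes S :: "'a::euclidean_space set"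
  assumes "subspace S" "z \<in> S\<^sup>\<bottom>"
  shows "norm (orth_proj S y) \<le> norm (y - z)"
proof -
  have "orth_proj S z = 0"
    using orth_proj_eq_0_iff[OF assms(1)] assms(2) by simp
  then have "orth_proj S y = orth_proj S (y - z)"
    using linear_diff[OF linear_orth_proj[OF assms(1)]] by simp
  then show ?thesis
    using norm_orth_proj_le[OF assms(1)] by simp
qed

lemma power2_norm_add_scaleR:
  fixes a p :: "'a::real_inner"
  shows "(norm (a + c *\<^sub>R p))\<^sup>2 = (norm a)\<^sup>2 + 2 * c * inner p a + c\<^sup>2 * (norm p)\<^sup>2"
  unfolding power2_norm_eq_inner
  by (simp add: inner_add_left inner_add_right inner_commute power2_eq_square algebra_simps)

lemma inner_orthogonal_comp_eq_0:
  assumes "v \<in> S" "w \<in> S\<^sup>\<bottom>"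
  shows "inner v w = 0"
  using assms by (simp add: orthogonal_comp_def orthogonal_def)

lemma lsc_le_limit:
  fixes K :: "'a::topological_space \<Rightarrow> ereal"
  assumes "lsc K" "s \<longlonglongrightarrow> x" "\<And>k. K (s k) \<le> ereal (B k)" "B \<longlonglongrightarrow> b"
  shows "K x \<le> ereal b"
proof (rule ccontr)
  assume "\<not> K x \<le> ereal b"
  then obtain e where "ereal b < e" "e < K x"
    using dense[of "ereal b" "K x"] by (auto simp: not_le)
  then have "e < Liminf (at x) K"
    using assms(1) unfolding lsc_def by (blast intro: less_le_trans)
  then have "\<forall>\<^sub>F y in at x. e < K y"
    by (rule less_LiminfD)
  then have "\<forall>\<^sub>F y in nhds x. y \<noteq> x \<longrightarrow> e < K y"
    by (simp add: eventually_at_filter)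
  then have "\<forall>\<^sub>F y in nhds x. e < K y"
    by (rule eventually_mono) (use \<open>e < K x\<close> in blast)
  then have "\<forall>\<^sub>F k in sequentially. e < K (s k)"
    using assms(2) unfolding filterlim_iff by blast
  moreover have "\<forall>\<^sub>F k in sequentially. ereal (B k) < e"
    using order_tendstoD(2)[OF tendsto_ereal[OF assms(4)] \<open>ereal b < e\<close>] .
  ultimately have "\<forall>\<^sub>F k in sequentially. False"
  proof eventually_elim
    case (elim k)
    then show False
      using assms(3)[of k] by simp
  qed
  then show False
    by simp
qed

lemma inner_norm_convex_combination:
  fixes u z l :: "'a::real_inner"
  shows "inner ((1 - t) *\<^sub>R u + t *\<^sub>R z) l + c/2 * (norm ((1 - t) *\<^sub>R u + t *\<^sub>R z))\<^sup>2
     = (1 - t) * (inner u l + c/2 * (norm u)\<^sup>2) + t * (inner z l + c/2 * (norm z)\<^sup>2)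
       - t * (1 - t) * (c/2 * (norm (z - u))\<^sup>2)"
  by (simp add: power2_norm_eq_inner inner_add_left inner_add_right inner_diff_left
      inner_diff_right inner_commute[of z u] field_simps)

lemma is_arg_min_quadratic_growth:
  fixes K :: "'a::real_inner \<Rightarrow> ereal"
  assumes "convex_ereal K"
    and "is_arg_min (\<lambda>v. K v + ereal (inner v l + c/2 * (norm v)\<^sup>2)) (\<lambda>_. True) u"
    and "\<bar>K u\<bar> \<noteq> \<infinity>" "\<bar>K z\<bar> \<noteq> \<infinity>"
  shows "real_of_ereal (K u) + (inner u l + c/2 * (norm u)\<^sup>2) + c/2 * (norm (z - u))\<^sup>2
     \<le> real_of_ereal (K z) + (inner z l + c/2 * (norm z)\<^sup>2)"
proof -
  define \<Phi> where "\<Phi> v = inner v l + c/2 * (norm v)\<^sup>2" for v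
  define d where "d = c/2 * (norm (z - u))\<^sup>2"
  obtain ku where ku: "K u = ereal ku"
    using assms(3) by (cases "K u") auto
  obtain kz where kz: "K z = ereal kz"
    using assms(4) by (cases "K z") auto
  \<comment> \<open>compare \<open>u\<close> with the points \<open>(1 - t) u + t z\<close> of the segment, then let \<open>t \<rightarrow> 0\<close>\<close>
  have interpolate: "ku + \<Phi> u \<le> kz + \<Phi> z - (1 - t) * d" if t: "0 < t" "t < 1" for t
  proof -
    define w where "w = (1 - t) *\<^sub>R u + t *\<^sub>R z"
    have "\<not> K w + ereal (\<Phi> w) < K u + ereal (\<Phi> u)"
      using assms(2) unfolding is_arg_min_def \<Phi>_def by blast
    moreover have "K w \<le> ereal (1 - t) * K u + ereal t * K z"
      using assms(1) t unfolding convex_ereal_def w_def by simp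
    ultimately have "ereal (ku + \<Phi> u) \<le> ereal ((1 - t) * ku + t * kz + \<Phi> w)"
      unfolding ku kz by (metis add_right_mono not_le order_less_le_trans plus_ereal.simps(1)
          times_ereal.simps(1))
    then have "ku + \<Phi> u \<le> (1 - t) * ku + t * kz + \<Phi> w"
      by simp
    moreover have "\<Phi> w = (1 - t) * \<Phi> u + t * \<Phi> z - t * (1 - t) * d"
      unfolding \<Phi>_def w_def d_def by (rule inner_norm_convex_combination)
    ultimately have "t * (ku + \<Phi> u) \<le> t * (kz + \<Phi> z - (1 - t) * d)"
      by (simp add: algebra_simps)
    then show ?thesis
      using t by simp
  qed
  have "\<forall>\<^sub>F t in at_right 0. t \<in> {0<..<(1::real)}"
    by (rule eventually_at_right_real) simp
  then have "\<forall>\<^sub>F t in at_right 0. ku + \<Phi> u \<le> kz + \<Phi> z - (1 - t) * d"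
    by (rule eventually_mono) (simp add: interpolate)
  moreover have "((\<lambda>t. kz + \<Phi> z - (1 - t) * d) \<longlongrightarrow> kz + \<Phi> z - (1 - 0) * d) (at_right 0)"
    by (intro tendsto_intros)
  ultimately have "ku + \<Phi> u \<le> kz + \<Phi> z - d"
    using tendsto_lowerbound[OF _ _ trivial_limit_at_right_real] by fastforce
  then show ?thesis
    by (simp add: ku kz \<Phi>_def d_def)
qed

lemma LIMSEQ_if_norm_diff_power2_0:
  fixes f :: "nat \<Rightarrow> 'a::real_normed_vector"
  assumes "(\<lambda>n. (norm (f n - l))\<^sup>2) \<longlonglongrightarrow> 0"
  shows "f \<longlonglongrightarrow> l"
proof -
  have "(\<lambda>n. sqrt ((norm (f n - l))\<^sup>2)) \<longlonglongrightarrow> sqrt 0"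
    using assms by (rule tendsto_real_sqrt)
  then have "(\<lambda>n. f n - l) \<longlonglongrightarrow> 0"
    by (simp add: tendsto_norm_zero_iff)
  then show ?thesis
    by (rule LIM_zero_cancel)
qed

lemma LIMSEQ_0_if_increments_ge:
  fixes G :: "nat \<Rightarrow> real" and f :: "nat \<Rightarrow> 'a::real_normed_vector"
  assumes step: "\<And>n. G n + c * (norm (f n))\<^sup>2 \<le> G (Suc n)"
    and "bdd_above (range G)" "c > 0"
  shows "f \<longlonglongrightarrow> 0"
proof -
  have nonneg: "0 \<le> c * (norm (f n))\<^sup>2" for n
    using \<open>c > 0\<close> by simp
  then have "incseq G"
    using step unfolding incseq_Suc_iff by (meson add_increasing2 order_refl order_trans)
  then have "G \<longlonglongrightarrow> (SUP n. G n)"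
    using \<open>bdd_above (range G)\<close> by (rule LIMSEQ_incseq_SUP[rotated])
  then have "(\<lambda>n. G (Suc n) - G n) \<longlonglongrightarrow> 0"
    using tendsto_diff[OF LIMSEQ_Suc] by fastforce
  then have "(\<lambda>n. c * (norm (f n))\<^sup>2) \<longlonglongrightarrow> 0"
  proof (rule tendsto_sandwich[of "\<lambda>_. 0", rotated 3])
    show "\<forall>\<^sub>F n in sequentially. c * (norm (f n))\<^sup>2 \<le> G (Suc n) - G n"
      using step by (intro always_eventually allI) (metis add.commute le_diff_eq)
  qed (use nonneg in auto)
  then have "(\<lambda>n. (1/c) * (c * (norm (f n))\<^sup>2)) \<longlonglongrightarrow> (1/c) * 0"
    by (rule tendsto_mult_left)
  then have "(\<lambda>n. (norm (f n - 0))\<^sup>2) \<longlonglongrightarrow> 0"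
    using \<open>c > 0\<close> by simp
  then show ?thesis
    by (rule LIMSEQ_if_norm_diff_power2_0)
qed

locale augmented_dual_ascent =
  fixes K :: "'a::euclidean_space \<Rightarrow> ereal"
    and M :: "'a set"
    and \<alpha> :: real
    and x \<Lambda> :: "nat \<Rightarrow> 'a"
  assumes subspace_M: "subspace M"
    and step_pos: "\<alpha> > 0"
    and feasible_K: "feasible K"
    and convex_K: "convex_ereal K"
    and dual_0: "\<Lambda> 0 = 0"
    and primal_step: "\<And>n. is_arg_min (\<lambda>z. K z + ereal (inner z (\<Lambda> n) + \<alpha> / 2 * (norm z)\<^sup>2))
                 (\<lambda>_. True) (x (Suc n))"
    and dual_step: "\<And>n. \<Lambda> (Suc n) = \<Lambda> n + \<alpha> *\<^sub>R orth_proj (M\<^sup>\<bottom>) (x (Suc n))"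
begin

abbreviation P :: "'a \<Rightarrow> 'a" where
  "P \<equiv> orth_proj (M\<^sup>\<bottom>)"

text \<open>The augmented Lagrangian as a real number; its value is junk where \<open>K z = \<infinity>\<close>,
  so it is only ever evaluated on the effective domain of \<open>K\<close>.\<close>
definition lagr :: "'a \<Rightarrow> 'a \<Rightarrow> real" where
  "lagr l z = real_of_ereal (K z) + inner z l + \<alpha>/2 * (norm z)\<^sup>2"

lemma abs_K_finite_iff: "\<bar>K z\<bar> \<noteq> \<infinity> \<longleftrightarrow> K z \<noteq> \<infinity>"
proof -
  obtain c :: real where "ereal c \<le> K z"
    using feasible_K unfolding feasible_def by blast
  then show ?thesis
    by (cases "K z") auto
qed

lemma K_somewhere_finite:
  obtains z where "K z \<noteq> \<infinity>"
  using feasible_K unfolding feasible_def by blast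

lemma K_primal_finite: "K (x (Suc n)) \<noteq> \<infinity>"
proof
  assume inf: "K (x (Suc n)) = \<infinity>"
  obtain z where z: "K z \<noteq> \<infinity>"
    by (rule K_somewhere_finite)
  then have "K z + ereal (inner z (\<Lambda> n) + \<alpha> / 2 * (norm z)\<^sup>2) < \<infinity>"
    using abs_K_finite_iff[of z] by (cases "K z") auto
  then show False
    using primal_step[of n] inf unfolding is_arg_min_def by auto
qed

lemma primal_quadratic_growth:
  assumes "K z \<noteq> \<infinity>"
  shows "lagr (\<Lambda> n) (x (Suc n)) + \<alpha>/2 * (norm (z - x (Suc n)))\<^sup>2 \<le> lagr (\<Lambda> n) z"
  using is_arg_min_quadratic_growth[OF convex_K primal_step] K_primal_finite assms
  by (simp add: lagr_def abs_K_finite_iff add.assoc)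

lemma dual_in_orthogonal_comp: "\<Lambda> n \<in> M\<^sup>\<bottom>"
proof (induction n)
  case 0
  then show ?case
    by (simp add: dual_0 subspace_0 subspace_orthogonal_comp)
next
  case (Suc n)
  then show ?case
    by (simp add: dual_step subspace_add subspace_scale subspace_orthogonal_comp orth_proj_in)
qed

text \<open>\<open>lagr (\<Lambda> n) (x (Suc n))\<close> is the value of the dual function at \<open>\<Lambda> n\<close>.\<close>
lemma dual_value_increase:
  "lagr (\<Lambda> n) (x (Suc n)) + \<alpha>/2 * (norm (P (x (Suc n))))\<^sup>2
     \<le> lagr (\<Lambda> (Suc n)) (x (Suc (Suc n)))"
proof -
  define p q d where "p = P (x (Suc n))" and "q = P (x (Suc (Suc n)))"
    and "d = x (Suc (Suc n)) - x (Suc n)"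
  have sub: "subspace (M\<^sup>\<bottom>)"
    by (rule subspace_orthogonal_comp)
  have "lagr (\<Lambda> (Suc n)) (x (Suc (Suc n))) = lagr (\<Lambda> n) (x (Suc (Suc n))) + \<alpha> * inner q p"
    using inner_orth_proj[OF sub orth_proj_in[OF sub], of "x (Suc (Suc n))" "x (Suc n)"]
    by (simp add: lagr_def dual_step inner_add_right p_def q_def)
  moreover have "lagr (\<Lambda> n) (x (Suc n)) + \<alpha>/2 * (norm d)\<^sup>2 \<le> lagr (\<Lambda> n) (x (Suc (Suc n)))"
    using primal_quadratic_growth[OF K_primal_finite] by (simp add: d_def)
  moreover have "\<alpha>/2 * (norm (q - p))\<^sup>2 \<le> \<alpha>/2 * (norm d)\<^sup>2"
    using norm_orth_proj_le[OF sub, of d] linear_diff[OF linear_orth_proj[OF sub]] step_pos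
    by (simp add: p_def q_def d_def power_mono)
  moreover have "\<alpha>/2 * (norm (q - p))\<^sup>2 + \<alpha> * inner q p = \<alpha>/2 * (norm q)\<^sup>2 + \<alpha>/2 * (norm p)\<^sup>2"
    by (simp add: power2_norm_eq_inner inner_diff_left inner_diff_right inner_commute algebra_simps)
  moreover have "0 \<le> \<alpha>/2 * (norm q)\<^sup>2"
    using step_pos by simp
  ultimately show ?thesis
    unfolding p_def by linarith
qed

lemma dual_value_le:
  assumes "\<And>n. norm (\<Lambda> n) \<le> B" "K z \<noteq> \<infinity>"
  shows "lagr (\<Lambda> n) (x (Suc n)) \<le> lagr 0 z + norm z * B"
proof -
  have "0 \<le> \<alpha>/2 * (norm (z - x (Suc n)))\<^sup>2"
    using step_pos by simp
  then have "lagr (\<Lambda> n) (x (Suc n)) \<le> lagr (\<Lambda> n) z"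
    using primal_quadratic_growth[OF assms(2), of n] by linarith
  also have "\<dots> = lagr 0 z + inner z (\<Lambda> n)"
    by (simp add: lagr_def)
  also have "inner z (\<Lambda> n) \<le> norm z * norm (\<Lambda> n)"
    by (rule norm_cauchy_schwarz)
  also have "\<dots> \<le> norm z * B"
    using assms(1) by (simp add: mult_left_mono)
  finally show ?thesis
    by simp
qed

lemma residual_tendsto_0:
  assumes "bounded (range \<Lambda>)"
  shows "(\<lambda>n. P (x (Suc n))) \<longlonglongrightarrow> 0"
proof (rule LIMSEQ_0_if_increments_ge[where c = "\<alpha>/2"])
  obtain B where "\<And>n. norm (\<Lambda> n) \<le> B"
    using assms unfolding bounded_iff by blast
  moreover obtain z where "K z \<noteq> \<infinity>"
    by (rule K_somewhere_finite)
  ultimately show "bdd_above (range (\<lambda>n. lagr (\<Lambda> n) (x (Suc n))))"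
    by (intro bdd_aboveI2) (rule dual_value_le)
next
  show "lagr (\<Lambda> n) (x (Suc n)) + \<alpha>/2 * (norm (P (x (Suc n))))\<^sup>2
      \<le> lagr (\<Lambda> (Suc n)) (x (Suc (Suc n)))" for n
    by (rule dual_value_increase)
qed (use step_pos in simp)

lemma primal_bounded:
  assumes "bounded (range \<Lambda>)"
  shows "bounded (range (\<lambda>n. x (Suc n)))"
proof -
  obtain B where B: "\<And>n. norm (\<Lambda> n) \<le> B"
    using assms unfolding bounded_iff by blast
  have "norm (x (Suc n)) \<le> norm (x 1) + B / \<alpha>" for n
  proof -
    define e where "e = norm (x (Suc n) - x 1)"
    have "lagr 0 (x 1) + \<alpha>/2 * e\<^sup>2 \<le> lagr 0 (x (Suc n))"
      using primal_quadratic_growth[OF K_primal_finite[of n], where n = 0]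
      by (simp add: dual_0 e_def)
    moreover have "lagr (\<Lambda> n) (x (Suc n)) + \<alpha>/2 * e\<^sup>2 \<le> lagr (\<Lambda> n) (x 1)"
      using primal_quadratic_growth[OF K_primal_finite[of 0], where n = n]
      by (simp add: e_def norm_minus_commute)
    ultimately have "\<alpha> * e\<^sup>2 \<le> inner (x 1 - x (Suc n)) (\<Lambda> n)"
      by (simp add: lagr_def inner_diff_left)
    also have "\<dots> \<le> norm (x 1 - x (Suc n)) * norm (\<Lambda> n)"
      by (rule norm_cauchy_schwarz)
    also have "\<dots> \<le> e * B"
      using B[of n] by (simp add: e_def norm_minus_commute mult_left_mono)
    finally have "(\<alpha> * e) * e \<le> B * e"
      by (simp add: power2_eq_square algebra_simps)
    have "0 \<le> B"
      using B[of 0] norm_ge_zero order_trans by blast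
    have "\<alpha> * e \<le> B"
    proof (cases "e = 0")
      case False
      then have "0 < e"
        by (simp add: e_def)
      with \<open>(\<alpha> * e) * e \<le> B * e\<close> show ?thesis
        by (rule mult_right_le_imp_le)
    qed (use \<open>0 \<le> B\<close> in simp)
    then have "e \<le> B / \<alpha>"
      using step_pos by (simp add: pos_le_divide_eq mult.commute)
    then show ?thesis
      using norm_triangle_sub[of "x (Suc n)" "x 1"] unfolding e_def by linarith
  qed
  then show ?thesis
    by (intro boundedI) auto
qed

lemma convergent_subsequence:
  assumes "bounded (range \<Lambda>)"
  obtains r z l where "strict_mono r" "(\<lambda>k. x (Suc (r k))) \<longlonglongrightarrow> z" "(\<lambda>k. \<Lambda> (r k)) \<longlonglongrightarrow> l"
proof -
  have "bounded (range (\<lambda>n. (x (Suc n), \<Lambda> n)))"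
    using bounded_Times[OF primal_bounded[OF assms] assms] by (rule bounded_subset) auto
  then obtain r zl where r: "strict_mono r" and lim: "((\<lambda>n. (x (Suc n), \<Lambda> n)) \<circ> r) \<longlonglongrightarrow> zl"
    using bounded_imp_convergent_subsequence by blast
  have "(\<lambda>k. x (Suc (r k))) \<longlonglongrightarrow> fst zl"
    using tendsto_fst[OF lim] by (simp add: o_def)
  moreover have "(\<lambda>k. \<Lambda> (r k)) \<longlonglongrightarrow> snd zl"
    using tendsto_snd[OF lim] by (simp add: o_def)
  ultimately show ?thesis
    using that r by blast
qed

text \<open>Minimality of \<open>z\<close> for the multiplier \<open>l\<close> is recorded in the quadratic growth form in
  which the lower semicontinuity argument delivers it.\<close>
definition saddle_point :: "'a \<Rightarrow> 'a \<Rightarrow> bool" where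
  "saddle_point z l \<longleftrightarrow> z \<in> M \<and> l \<in> M\<^sup>\<bottom> \<and> K z \<noteq> \<infinity> \<and>
     (\<forall>w. K w \<noteq> \<infinity> \<longrightarrow> lagr l z + \<alpha>/2 * (norm (w - z))\<^sup>2 \<le> lagr l w)"

lemma primal_cluster_in_subspace:
  assumes "bounded (range \<Lambda>)" "strict_mono r" "(\<lambda>k. x (Suc (r k))) \<longlonglongrightarrow> z"
  shows "z \<in> M"
proof -
  have sub: "subspace (M\<^sup>\<bottom>)"
    by (rule subspace_orthogonal_comp)
  have "(\<lambda>k. P (x (Suc (r k)))) \<longlonglongrightarrow> 0"
    using LIMSEQ_subseq_LIMSEQ[OF residual_tendsto_0[OF assms(1)] assms(2)] by (simp add: o_def)
  moreover have "bounded_linear P"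
    using linear_orth_proj[OF sub] by (simp add: linear_conv_bounded_linear)
  then have "(\<lambda>k. P (x (Suc (r k)))) \<longlonglongrightarrow> P z"
    using assms(3) by (rule bounded_linear.tendsto)
  ultimately have "P z = 0"
    using LIMSEQ_unique by blast
  then show ?thesis
    using orth_proj_eq_0_iff[OF sub] orthogonal_comp_self[OF subspace_M] by simp
qed

lemma K_cluster_le:
  assumes "(\<lambda>k. x (Suc (r k))) \<longlonglongrightarrow> z" "(\<lambda>k. \<Lambda> (r k)) \<longlonglongrightarrow> l" "K w \<noteq> \<infinity>"
  shows "K z \<le> ereal (lagr l w - \<alpha>/2 * (norm (w - z))\<^sup>2 - inner z l - \<alpha>/2 * (norm z)\<^sup>2)"
proof (rule lsc_le_limit[OF _ assms(1)])
  show "lsc K"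
    using feasible_K unfolding feasible_def by blast
next
  fix k
  define y where "y = x (Suc (r k))"
  have "K y = ereal (real_of_ereal (K y))"
    using K_primal_finite abs_K_finite_iff by (simp add: y_def ereal_real')
  moreover have "real_of_ereal (K y) \<le> lagr (\<Lambda> (r k)) w - \<alpha>/2 * (norm (w - y))\<^sup>2
      - inner y (\<Lambda> (r k)) - \<alpha>/2 * (norm y)\<^sup>2"
    using primal_quadratic_growth[OF assms(3), of "r k"] by (simp add: lagr_def y_def)
  ultimately show "K y \<le> ereal (lagr (\<Lambda> (r k)) w - \<alpha>/2 * (norm (w - y))\<^sup>2 - inner y (\<Lambda> (r k))
      - \<alpha>/2 * (norm y)\<^sup>2)"
    by (metis ereal_less_eq(3))
next
  show "(\<lambda>k. lagr (\<Lambda> (r k)) w - \<alpha>/2 * (norm (w - x (Suc (r k))))\<^sup>2 - inner (x (Suc (r k))) (\<Lambda> (r k))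
      - \<alpha>/2 * (norm (x (Suc (r k))))\<^sup>2)
    \<longlonglongrightarrow> lagr l w - \<alpha>/2 * (norm (w - z))\<^sup>2 - inner z l - \<alpha>/2 * (norm z)\<^sup>2"
    unfolding lagr_def using assms(1,2) by (intro tendsto_intros)
qed

lemma saddle_point_of_cluster:
  assumes "bounded (range \<Lambda>)" "strict_mono r"
    and "(\<lambda>k. x (Suc (r k))) \<longlonglongrightarrow> z" "(\<lambda>k. \<Lambda> (r k)) \<longlonglongrightarrow> l"
  shows "saddle_point z l"
proof -
  note bound = K_cluster_le[OF assms(3,4)]
  obtain w0 where "K w0 \<noteq> \<infinity>"
    by (rule K_somewhere_finite)
  then have "K z \<noteq> \<infinity>"
    using bound[of w0] by auto
  then have "K z = ereal (real_of_ereal (K z))"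
    using abs_K_finite_iff by (simp add: ereal_real')
  then have "real_of_ereal (K z)
      \<le> lagr l w - \<alpha>/2 * (norm (w - z))\<^sup>2 - inner z l - \<alpha>/2 * (norm z)\<^sup>2"
    if "K w \<noteq> \<infinity>" for w
    using bound[OF that] by (metis ereal_less_eq(3))
  then have "lagr l z + \<alpha>/2 * (norm (w - z))\<^sup>2 \<le> lagr l w" if "K w \<noteq> \<infinity>" for w
    using that unfolding lagr_def by fastforce
  moreover have "l \<in> M\<^sup>\<bottom>"
    using closed_sequentially[OF closed_subspace[OF subspace_orthogonal_comp] _ assms(4)]
      dual_in_orthogonal_comp by blast
  ultimately show ?thesis
    using primal_cluster_in_subspace[OF assms(1-3)] \<open>K z \<noteq> \<infinity>\<close> unfolding saddle_point_def by blast
qed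

lemma dual_fejer:
  assumes "saddle_point z l"
  shows "(norm (\<Lambda> (Suc n) - l))\<^sup>2 + \<alpha>\<^sup>2 * (norm (x (Suc n) - z))\<^sup>2 \<le> (norm (\<Lambda> n - l))\<^sup>2"
proof -
  define y p e where "y = x (Suc n)" and "p = P y" and "e = norm (y - z)"
  have sub: "subspace (M\<^sup>\<bottom>)"
    by (rule subspace_orthogonal_comp)
  have z: "z \<in> M" "K z \<noteq> \<infinity>" and l: "l \<in> M\<^sup>\<bottom>"
    and growth: "\<And>w. K w \<noteq> \<infinity> \<Longrightarrow> lagr l z + \<alpha>/2 * (norm (w - z))\<^sup>2 \<le> lagr l w"
    using assms unfolding saddle_point_def by auto
  have "\<Lambda> n - l \<in> M\<^sup>\<bottom>"
    using dual_in_orthogonal_comp l sub by (simp add: subspace_diff)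
  have "lagr (\<Lambda> n) y + \<alpha>/2 * e\<^sup>2 \<le> lagr (\<Lambda> n) z"
    using primal_quadratic_growth[OF z(2), of n] by (simp add: y_def e_def norm_minus_commute)
  moreover have "lagr l z + \<alpha>/2 * e\<^sup>2 \<le> lagr l y"
    using growth[OF K_primal_finite[of n]] by (simp add: y_def e_def)
  moreover have "inner z (\<Lambda> n) = 0" "inner z l = 0"
    using inner_orthogonal_comp_eq_0 z(1) l dual_in_orthogonal_comp by blast+
  ultimately have "inner y (\<Lambda> n - l) \<le> - \<alpha> * e\<^sup>2"
    unfolding lagr_def inner_diff_right by linarith
  then have "inner p (\<Lambda> n - l) \<le> - \<alpha> * e\<^sup>2"
    using inner_orth_proj[OF sub \<open>\<Lambda> n - l \<in> M\<^sup>\<bottom>\<close>, of y] by (simp add: p_def)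
  then have "2 * \<alpha> * inner p (\<Lambda> n - l) \<le> 2 * \<alpha> * (- \<alpha> * e\<^sup>2)"
    using step_pos by (intro mult_left_mono) auto
  moreover have "norm p \<le> e"
    using norm_orth_proj_le_norm_diff[OF sub] z(1) subspace_M
    by (simp add: p_def e_def orthogonal_comp_self)
  then have "\<alpha>\<^sup>2 * (norm p)\<^sup>2 \<le> \<alpha>\<^sup>2 * e\<^sup>2"
    by (simp add: mult_left_mono power_mono)
  moreover have "\<Lambda> (Suc n) - l = (\<Lambda> n - l) + \<alpha> *\<^sub>R p"
    by (simp add: dual_step p_def y_def)
  then have "(norm (\<Lambda> (Suc n) - l))\<^sup>2
      = (norm (\<Lambda> n - l))\<^sup>2 + 2 * \<alpha> * inner p (\<Lambda> n - l) + \<alpha>\<^sup>2 * (norm p)\<^sup>2"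
    by (simp only: power2_norm_add_scaleR)
  moreover have "2 * \<alpha> * (- \<alpha> * e\<^sup>2) = - 2 * (\<alpha>\<^sup>2 * e\<^sup>2)"
    by (simp add: power2_eq_square)
  ultimately show ?thesis
    unfolding y_def[symmetric] e_def[symmetric] by linarith
qed

lemma saddle_point_convergence:
  assumes "saddle_point z l" "strict_mono r" "(\<lambda>k. \<Lambda> (r k)) \<longlonglongrightarrow> l"
  shows "\<Lambda> \<longlonglongrightarrow> l" and "(\<lambda>n. x (Suc n)) \<longlonglongrightarrow> z"
proof -
  define D where "D n = (norm (\<Lambda> n - l))\<^sup>2" for n
  have fejer: "- D n + \<alpha>\<^sup>2 * (norm (x (Suc n) - z))\<^sup>2 \<le> - D (Suc n)" for n
    using dual_fejer[OF assms(1), of n] by (simp add: D_def)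
  have "bdd_above (range (\<lambda>n. - D n))"
    by (rule bdd_aboveI2[where M = 0]) (simp add: D_def)
  then have "(\<lambda>n. x (Suc n) - z) \<longlonglongrightarrow> 0"
    using fejer step_pos by (intro LIMSEQ_0_if_increments_ge[where c = "\<alpha>\<^sup>2"]) auto
  then show "(\<lambda>n. x (Suc n)) \<longlonglongrightarrow> z"
    by (rule LIM_zero_cancel)
  have "decseq D"
    unfolding decseq_Suc_iff
  proof
    fix n
    have "0 \<le> \<alpha>\<^sup>2 * (norm (x (Suc n) - z))\<^sup>2"
      by simp
    then show "D (Suc n) \<le> D n"
      using fejer[of n] by linarith
  qed
  then have "D \<longlonglongrightarrow> (INF n. D n)"
    by (intro LIMSEQ_decseq_INF bdd_belowI2[where m = 0]) (simp_all add: D_def)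
  then have "(\<lambda>k. D (r k)) \<longlonglongrightarrow> (INF n. D n)"
    using LIMSEQ_subseq_LIMSEQ[OF _ assms(2)] by (simp add: o_def)
  moreover have "(\<lambda>k. D (r k)) \<longlonglongrightarrow> 0"
    using tendsto_power[OF tendsto_norm[OF LIM_zero[OF assms(3)]], of 2] by (simp add: D_def)
  ultimately have "D \<longlonglongrightarrow> 0"
    using \<open>D \<longlonglongrightarrow> (INF n. D n)\<close> LIMSEQ_unique by metis
  then show "\<Lambda> \<longlonglongrightarrow> l"
    unfolding D_def by (rule LIMSEQ_if_norm_diff_power2_0)
qed

lemma saddle_point_is_arg_min:
  assumes "saddle_point z l"
  shows "is_arg_min (\<lambda>w. K w + ereal (\<alpha> / 2 * (norm w)\<^sup>2)) (\<lambda>w. w \<in> M) z"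
  unfolding is_arg_min_def
proof (intro conjI notI)
  show "z \<in> M"
    using assms unfolding saddle_point_def by blast
next
  assume "\<exists>w. w \<in> M \<and> K w + ereal (\<alpha> / 2 * (norm w)\<^sup>2) < K z + ereal (\<alpha> / 2 * (norm z)\<^sup>2)"
  then obtain w where "w \<in> M"
    and less: "K w + ereal (\<alpha> / 2 * (norm w)\<^sup>2) < K z + ereal (\<alpha> / 2 * (norm z)\<^sup>2)"
    by blast
  have "K w \<noteq> \<infinity>"
    using less by auto
  have "l \<in> M\<^sup>\<bottom>" "z \<in> M" "K z \<noteq> \<infinity>"
    using assms unfolding saddle_point_def by auto
  have "lagr l z + \<alpha>/2 * (norm (w - z))\<^sup>2 \<le> lagr l w"
    using assms \<open>K w \<noteq> \<infinity>\<close> unfolding saddle_point_def by blast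
  moreover have "0 \<le> \<alpha>/2 * (norm (w - z))\<^sup>2"
    using step_pos by simp
  ultimately have "lagr l z \<le> lagr l w"
    by linarith
  moreover have "inner z l = 0" "inner w l = 0"
    using inner_orthogonal_comp_eq_0 \<open>l \<in> M\<^sup>\<bottom>\<close> \<open>z \<in> M\<close> \<open>w \<in> M\<close> by blast+
  ultimately have "real_of_ereal (K z) + \<alpha>/2 * (norm z)\<^sup>2 \<le> real_of_ereal (K w) + \<alpha>/2 * (norm w)\<^sup>2"
    by (simp add: lagr_def)
  moreover obtain kz kw where "K z = ereal kz" "K w = ereal kw"
    using \<open>K z \<noteq> \<infinity>\<close> \<open>K w \<noteq> \<infinity>\<close> abs_K_finite_iff by fastforce
  ultimately show False
    using less by simp
qed

end

theorem theorem4: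
  fixes K :: "'a::euclidean_space \<Rightarrow> ereal"
    and M :: "'a set"
    and \<alpha> :: real
    and x \<Lambda> :: "nat \<Rightarrow> 'a"
  assumes "subspace M"
    and "\<alpha> > 0"
    and "feasible K"
    and "convex_ereal K"
    and "\<Lambda> 0 = 0"
    and "\<And>n. is_arg_min (\<lambda>z. K z + ereal (inner z (\<Lambda> n) + \<alpha> / 2 * (norm z)\<^sup>2))
                 (\<lambda>_. True) (x (Suc n))"
    and "\<And>n. \<Lambda> (Suc n) = \<Lambda> n + \<alpha> *\<^sub>R orth_proj (orthogonal_comp M) (x (Suc n))"
    and "bounded (range (\<lambda>n. \<Lambda> (Suc n)))"
  shows "\<exists>xs Ls. x \<longlonglongrightarrow> xs \<and> \<Lambda> \<longlonglongrightarrow> Ls \<and>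
           is_arg_min (\<lambda>z. K z + ereal (\<alpha> / 2 * (norm z)\<^sup>2)) (\<lambda>z. z \<in> M) xs"
proof -
  interpret augmented_dual_ascent K M \<alpha> x \<Lambda>
    using assms(1-7) by unfold_locales
  have "\<Lambda> n \<in> insert (\<Lambda> 0) (range (\<lambda>n. \<Lambda> (Suc n)))" for n
    by (cases n) auto
  then have "range \<Lambda> \<subseteq> insert (\<Lambda> 0) (range (\<lambda>n. \<Lambda> (Suc n)))"
    by blast
  then have "bounded (range \<Lambda>)"
    using assms(8) bounded_insert bounded_subset by metis
  then obtain r z l where r: "strict_mono r"
    and z: "(\<lambda>k. x (Suc (r k))) \<longlonglongrightarrow> z" and l: "(\<lambda>k. \<Lambda> (r k)) \<longlonglongrightarrow> l"
    by (rule convergent_subsequence)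
  have "saddle_point z l"
    using saddle_point_of_cluster[OF \<open>bounded (range \<Lambda>)\<close> r z l] .
  then have "\<Lambda> \<longlonglongrightarrow> l" "x \<longlonglongrightarrow> z"
    using saddle_point_convergence[OF _ r l] LIMSEQ_imp_Suc by blast+
  then show ?thesis
    using saddle_point_is_arg_min[OF \<open>saddle_point z l\<close>] by blast
qed

end
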